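(* Let $(E,d)$ be a metric vector space over $K\in\{\mathbb R,\mathbb C,\mathbb H\}$ such that $d$ is $C_0$-translation invariant for some $C_0\ge0$. Then for all $x,y\in E$ the limit $\delta(x,y)=\lim_{n\to+\infty}\frac1n d(nx,ny)$ exists, and $\delta(x,y)\le d(x,y)+2C_0$.
   Context: A metric vector space is a topological vector space over $K$ whose topology is generated by the metric $d$. $d$ is $C_0$-translation invariant if $d(x+z,y+z)\le d(x,y)+C_0$ for all $x,y,z\in E$. *)

theory Defs
  imports "HOL-Analysis.Analysis"
begin

definition metric_vector_space :: "('a::real_vector \<Rightarrow> 'a \<Rightarrow> real) \<Rightarrow> bool" where
  "metric_vector_space d \<longleftrightarrow>
     Metric_space UNIV d \<and>
     continuous_map (prod_topology (Metric_space.mtopology UNIV d) (Metric_space.mtopology UNIV d))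
        (Metric_space.mtopology UNIV d) (\<lambda>(x, y). x + y) \<and>
     continuous_map (prod_topology euclideanreal (Metric_space.mtopology UNIV d))
        (Metric_space.mtopology UNIV d) (\<lambda>(c, x). c *\<^sub>R x)"

definition translation_invariant_const :: "('a::plus \<Rightarrow> 'a \<Rightarrow> real) \<Rightarrow> real \<Rightarrow> bool" where
  "translation_invariant_const d C0 \<longleftrightarrow> (\<forall>x y z. d (x + z) (y + z) \<le> d x y + C0)"

end

theory Submission
  imports Defs
begin

text \<open>Going from (m + n) x to (m + n) y through m x + n y and removing the common translate
  from each half costs at most 2 C0, so b n := d (n x) (n y) + 2 C0 is subadditive. By Fekete's
  lemma b n / n, and with it d (n x) (n y) / n, converges to inf b n / n, which is at most
  b 1 = d x y + 2 C0.\<close>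

lemma subadditive_le_mult_add:
  fixes b :: "nat \<Rightarrow> real"
  assumes sub: "\<And>m n. b (m + n) \<le> b m + b n"
  shows "b (q * k + r) \<le> real q * b k + b r"
proof (induction q)
  case 0
  then show ?case by simp
next
  case (Suc q)
  have "b (Suc q * k + r) = b (k + (q * k + r))"
    by (simp add: add.assoc)
  also have "\<dots> \<le> b k + b (q * k + r)"
    by (rule sub)
  also have "\<dots> \<le> real (Suc q) * b k + b r"
    using Suc by (simp add: algebra_simps)
  finally show ?case .
qed

lemma subadditive_div_le:
  fixes b :: "nat \<Rightarrow> real"
  assumes sub: "\<And>m n. b (m + n) \<le> b m + b n"
    and "k \<ge> 1" and "n \<ge> 1"
  shows "b n / real n \<le> b k / real k + (\<Sum>r\<le>k. \<bar>b r\<bar>) / real n"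
proof -
  define q r where "q = n div k" and "r = n mod k"
  have n_eq: "real n = real q * real k + real r"
    unfolding q_def r_def by (metis div_mult_mod_eq of_nat_add of_nat_mult)
  have "r < k"
    unfolding r_def using \<open>k \<ge> 1\<close> by simp
  have "b n \<le> real q * b k + b r"
    using subadditive_le_mult_add[OF sub, of q k r] by (simp add: q_def r_def)
  also have "real q * b k = real n * (b k / real k) - real r * (b k / real k)"
    using \<open>k \<ge> 1\<close> by (simp add: n_eq field_simps)
  also have "- (real r * (b k / real k)) \<le> \<bar>b k\<bar>"
  proof -
    have "\<bar>real r * (b k / real k)\<bar> = real r / real k * \<bar>b k\<bar>"
      by (simp add: abs_mult)
    also have "\<dots> \<le> \<bar>b k\<bar>"
      using \<open>r < k\<close> by (intro mult_left_le_one_le) auto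
    finally show ?thesis by linarith
  qed
  moreover have "\<bar>b k\<bar> + \<bar>b r\<bar> \<le> (\<Sum>r\<le>k. \<bar>b r\<bar>)"
    using \<open>r < k\<close> by (subst sum.remove[of _ k]) (auto intro!: member_le_sum)
  ultimately have "b n \<le> real n * (b k / real k) + (\<Sum>r\<le>k. \<bar>b r\<bar>)"
    by linarith
  then show ?thesis
    using \<open>n \<ge> 1\<close> by (simp add: field_simps)
qed

lemma fekete_subadditive:
  fixes b :: "nat \<Rightarrow> real"
  assumes sub: "\<And>m n. b (m + n) \<le> b m + b n"
    and bdd: "bdd_below ((\<lambda>n. b n / real n) ` {1..})"
  shows "(\<lambda>n. b n / real n) \<longlonglongrightarrow> (INF n\<in>{1..}. b n / real n)"
proof -
  define L where "L = (INF n\<in>{1..}. b n / real n)"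
  have L_le: "L \<le> b n / real n" if "n \<ge> 1" for n
    unfolding L_def using bdd that by (intro cINF_lower) auto
  show ?thesis
    unfolding L_def[symmetric]
  proof (rule LIMSEQ_I)
    fix e :: real
    assume e: "e > 0"
    have "\<exists>k\<in>{1..}. b k / real k < L + e / 2"
      using cINF_less_iff[OF _ bdd, of "L + e / 2"] e unfolding L_def by auto
    then obtain k where k: "k \<ge> 1" "b k / real k < L + e / 2"
      by auto
    define M where "M = (\<Sum>r\<le>k. \<bar>b r\<bar>)"
    obtain N :: nat where N: "real N > 2 * M / e"
      using reals_Archimedean2 by blast
    show "\<exists>n0. \<forall>n\<ge>n0. norm (b n / real n - L) < e"
    proof (intro exI allI impI)
      fix n
      assume n: "n \<ge> Suc N"
      have "2 * M / e < real n"
        using N n by linarith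
      then have "M / real n < e / 2"
        using e n by (simp add: field_simps)
      then have "b n / real n - L < e"
        using subadditive_div_le[OF sub k(1), of n] n k(2) unfolding M_def by linarith
      then show "norm (b n / real n - L) < e"
        using L_le[of n] n by simp
    qed
  qed
qed

lemma translation_invariant_const_add_le:
  fixes d :: "'a::ab_semigroup_add \<Rightarrow> 'a \<Rightarrow> real"
  assumes "Metric_space UNIV d" and "translation_invariant_const d C0"
  shows "d (u + u') (v + v') \<le> d u v + d u' v' + 2 * C0"
proof -
  have shift: "d (a + c) (b + c) \<le> d a b + C0" for a b c
    using assms(2) unfolding translation_invariant_const_def by blast
  have "d (u + u') (v + v') \<le> d (u + u') (v + u') + d (v + u') (v + v')"
    using Metric_space.triangle[OF assms(1)] by blast
  also have "d (v + u') (v + v') = d (u' + v) (v' + v)"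
    by (simp add: add.commute)
  finally show ?thesis
    using shift[where a = u and b = v and c = u'] shift[where a = u' and b = v' and c = v]
    by linarith
qed

theorem proposition1:
  fixes d :: "'a::real_vector \<Rightarrow> 'a \<Rightarrow> real" and C0 :: real
  assumes "metric_vector_space d"
    and "C0 \<ge> 0"
    and "translation_invariant_const d C0"
  shows "\<forall>x y. \<exists>L. ((\<lambda>n. d (real n *\<^sub>R x) (real n *\<^sub>R y) / real n) \<longlongrightarrow> L) sequentially
                   \<and> L \<le> d x y + 2 * C0"
proof (intro allI)
  fix x y :: 'a
  have metric: "Metric_space UNIV d"
    using assms(1) unfolding metric_vector_space_def by simp
  define b where "b n = d (real n *\<^sub>R x) (real n *\<^sub>R y) + 2 * C0" for n
  have "b (m + n) \<le> b m + b n" for m n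
    using translation_invariant_const_add_le[OF metric assms(3),
        of "real m *\<^sub>R x" "real n *\<^sub>R x" "real m *\<^sub>R y" "real n *\<^sub>R y"]
    by (simp add: b_def scaleR_add_left)
  moreover have bdd: "bdd_below ((\<lambda>n. b n / real n) ` {1..})"
    using Metric_space.nonneg[OF metric] assms(2)
    by (intro bdd_belowI[of _ 0]) (auto simp: b_def)
  ultimately have "(\<lambda>n. b n / real n - 2 * C0 / real n) \<longlonglongrightarrow> (INF n\<in>{1..}. b n / real n) - 0"
    by (intro tendsto_intros fekete_subadditive)
  moreover have "b n / real n - 2 * C0 / real n = d (real n *\<^sub>R x) (real n *\<^sub>R y) / real n" for n
    by (simp add: b_def add_divide_distrib)
  moreover have "(INF n\<in>{1..}. b n / real n) \<le> d x y + 2 * C0"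
    using cINF_lower[OF bdd, of 1] by (simp add: b_def)
  ultimately show "\<exists>L. ((\<lambda>n. d (real n *\<^sub>R x) (real n *\<^sub>R y) / real n) \<longlongrightarrow> L) sequentially
                   \<and> L \<le> d x y + 2 * C0"
    by auto
qed

end
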